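(* Let $a,b\in\mathbb{C}$ with $a\neq0$, $\Re(b)>0$, $\Re(b+a)>0$, $\Re(b-a)>0$, $\frac32\pm\frac{a}{2b}\notin\mathbb{Z}_0^-$ and $\frac ab\notin\{\pm1,\pm3,\pm5,\dots\}$. Then $$ {}_3F_2\!\left(\begin{matrix}1,\ \frac12-\frac{a}{2b},\ \frac12+\frac{a}{2b}\\ \frac32-\frac{a}{2b},\ \frac32+\frac{a}{2b}\end{matrix};\,-1\right) =\frac{b^2-a^2}{2ab}\left[\frac\pi2\sec\!\Big(\frac{\pi a}{2b}\Big)-\beta\!\Big(\frac{a+b}{2b}\Big)\right] =\frac{b^2-a^2}{8ab}\left[\Psi\!\Big(\frac{3b-a}{4b}\Big)-\Psi\!\Big(\frac{b-a}{4b}\Big)-\Psi\!\Big(\frac{3b+a}{4b}\Big)+\Psi\!\Big(\frac{b+a}{4b}\Big)\right]. $$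
   Context: $\mathbb{Z}_0^-=\{0,-1,-2,\dots\}$. The Pochhammer symbol is $(\lambda)_0=1$, $(\lambda)_n=\lambda(\lambda+1)\cdots(\lambda+n-1)$ for $n\ge1$. The generalized hypergeometric series is ${}_pF_q\!\left(\begin{matrix}\alpha_1,\dots,\alpha_p\\ \beta_1,\dots,\beta_q\end{matrix};z\right)=\sum_{n=0}^\infty\frac{(\alpha_1)_n\cdots(\alpha_p)_n}{(\beta_1)_n\cdots(\beta_q)_n}\frac{z^n}{n!}$ (with no $\beta_j\in\mathbb{Z}_0^-$). The (lower case) beta function of one variable is $\beta(x)=\sum_{k=0}^\infty\frac{(-1)^k}{k+x}$ for $x\in\mathbb{C}\setminus\mathbb{Z}_0^-$. $\Psi=\Gamma'/\Gamma$ is the digamma function. *)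

theory Defs
  imports "HOL-Analysis.Analysis"
begin

definition hyp_term :: "complex list \<Rightarrow> complex list \<Rightarrow> complex \<Rightarrow> nat \<Rightarrow> complex" where
  "hyp_term as bs z n =
     (\<Prod>a\<leftarrow>as. pochhammer a n) / (\<Prod>b\<leftarrow>bs. pochhammer b n) * z ^ n / of_nat (fact n)"

definition hypergeom :: "complex list \<Rightarrow> complex list \<Rightarrow> complex \<Rightarrow> complex" where
  "hypergeom as bs z = (\<Sum>n. hyp_term as bs z n)"

definition beta1 :: "complex \<Rightarrow> complex" where
  "beta1 x = (\<Sum>k. (-1) ^ k / (of_nat k + x))"

end

theory Submission
  imports Defs
begin

text \<open>With \<open>x = 1/2 - a/(2b)\<close> the series is \<open>\<^sub>3F\<^sub>2(1, x, 1 - x; x + 1, 2 - x; -1)\<close>.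
Since \<open>(x)\<^sub>n / (x + 1)\<^sub>n = x / (x + n)\<close>, its terms split into partial fractions and it equals
\<open>x (1 - x) / (1 - 2x) \<cdot> (\<beta>(x) - \<beta>(1 - x))\<close>. Writing \<open>\<beta>(x) = (\<psi>((x + 1)/2) - \<psi>(x/2)) / 2\<close>,
the reflection formula for \<open>\<psi>\<close> gives \<open>\<beta>(x) + \<beta>(1 - x) = \<pi> / sin (\<pi> x)\<close>; eliminating \<open>\<beta>(x)\<close>
yields the first identity, and the digamma form of \<open>\<beta>\<close> the second.\<close>

lemma Digamma_reflection_complex:
  fixes z :: complex
  assumes "z \<notin> \<int>"
  shows "Digamma (1 - z) - Digamma z = of_real pi * cot (of_real pi * z)"
proof -
  have z: "z \<notin> \<int>\<^sub>\<le>\<^sub>0" "1 - z \<notin> \<int>\<^sub>\<le>\<^sub>0"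
    using assms Ints_diff[of 1 "1 - z"] by (auto intro: not_in_Ints_imp_not_in_nonpos_Ints)
  have sin: "sin (of_real pi * z) \<noteq> 0"
    using assms by (subst sin_eq_0) auto
  text \<open>Differentiate both sides of the reflection formula for \<open>\<Gamma>\<close>.\<close>
  have "((\<lambda>z. Gamma z * Gamma (1 - z)) has_field_derivative
          Gamma z * Gamma (1 - z) * (Digamma z - Digamma (1 - z))) (at z)"
    using z by (auto intro!: derivative_eq_intros simp: algebra_simps)
  moreover have "((\<lambda>z. Gamma z * Gamma (1 - z)) has_field_derivative
          - (of_real pi)\<^sup>2 * cos (of_real pi * z) / (sin (of_real pi * z))\<^sup>2) (at z)"
    unfolding Gamma_reflection_complex using sin
    by (auto intro!: derivative_eq_intros simp: power2_eq_square)
  ultimately have "of_real pi / sin (of_real pi * z) * (Digamma z - Digamma (1 - z))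
      = - (of_real pi)\<^sup>2 * cos (of_real pi * z) / (sin (of_real pi * z))\<^sup>2"
    by (metis DERIV_unique Gamma_reflection_complex)
  also have "\<dots> = of_real pi / sin (of_real pi * z) * (- of_real pi * cot (of_real pi * z))"
    by (simp add: cot_def power2_eq_square)
  finally have "Digamma z - Digamma (1 - z) = - of_real pi * cot (of_real pi * z)"
    using sin by (subst (asm) mult_left_cancel) auto
  then show ?thesis
    by (simp add: algebra_simps)
qed

lemma LIMSEQ_even_odd:
  assumes "(\<lambda>n. f (2 * n)) \<longlonglongrightarrow> (l :: 'a :: topological_space)"
      and "(\<lambda>n. f (2 * n + 1)) \<longlonglongrightarrow> l"
  shows "f \<longlonglongrightarrow> l"
  unfolding tendsto_def
proof (intro allI impI)
  fix S assume S: "open S" "l \<in> S"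
  from assms(1) S obtain n1 where n1: "\<And>n. n \<ge> n1 \<Longrightarrow> f (2 * n) \<in> S"
    unfolding tendsto_def eventually_sequentially by blast
  from assms(2) S obtain n2 where n2: "\<And>n. n \<ge> n2 \<Longrightarrow> f (2 * n + 1) \<in> S"
    unfolding tendsto_def eventually_sequentially by blast
  show "\<forall>\<^sub>F n in sequentially. f n \<in> S"
    unfolding eventually_sequentially
  proof (intro exI allI impI)
    fix n assume "2 * n1 + 2 * n2 + 1 \<le> n"
    then show "f n \<in> S"
      by (cases "even n") (auto elim!: evenE oddE intro!: n1 n2)
  qed
qed

lemma add_of_nat_neq_0_if_notin_nonpos_Ints:
  fixes x :: "'a :: ring_1"
  assumes "x \<notin> \<int>\<^sub>\<le>\<^sub>0"
  shows "x + of_nat n \<noteq> 0"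
proof
  assume "x + of_nat n = 0"
  then have "x = - of_nat n" by (simp add: eq_neg_iff_add_eq_0)
  with assms show False by simp
qed

lemma sums_alternating_inverse_Digamma:
  fixes x :: complex
  assumes "x \<notin> \<int>\<^sub>\<le>\<^sub>0"
  shows "(\<lambda>k. (-1) ^ k / (of_nat k + x)) sums ((Digamma ((x + 1) / 2) - Digamma (x / 2)) / 2)"
proof -
  define f where "f k = (-1) ^ k / (of_nat k + x)" for k
  define s where "s = (Digamma ((x + 1) / 2) - Digamma (x / 2)) / 2"
  have ne: "x / 2 \<noteq> 0" "(x + 1) / 2 \<noteq> 0"
    using add_of_nat_neq_0_if_notin_nonpos_Ints[OF assms, of 0]
          add_of_nat_neq_0_if_notin_nonpos_Ints[OF assms, of 1] by auto
  text \<open>The difference of the two defining series of \<open>\<psi>\<close> is the series of pairs \<open>f (2j) + f (2j+1)\<close>.\<close>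
  have "(\<lambda>j. ((inverse (of_nat (Suc j)) - inverse ((x + 1) / 2 + of_nat j)) -
              (inverse (of_nat (Suc j)) - inverse (x / 2 + of_nat j))) / 2)
        sums (((Digamma ((x + 1) / 2) + euler_mascheroni) - (Digamma (x / 2) + euler_mascheroni)) / 2)"
    using summable_Digamma[OF ne(1)] summable_Digamma[OF ne(2)]
    by (intro sums_divide sums_diff) (simp_all add: Digamma_def summable_sums)
  also have "(\<lambda>j. ((inverse (of_nat (Suc j)) - inverse ((x + 1) / 2 + of_nat j)) -
              (inverse (of_nat (Suc j)) - inverse (x / 2 + of_nat j))) / 2)
      = (\<lambda>j. f (2 * j) + f (2 * j + 1))"
  proof
    fix j :: nat
    have "inverse (y / 2 + of_nat j) = 2 / (of_nat (2 * j) + y)" for y :: complex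
      using inverse_divide[of "of_nat (2 * j) + y" 2] by (simp add: add_divide_distrib add.commute)
    from this[of x] this[of "x + 1"] show "((inverse (of_nat (Suc j)) - inverse ((x + 1) / 2 + of_nat j)) -
              (inverse (of_nat (Suc j)) - inverse (x / 2 + of_nat j))) / 2 = f (2 * j) + f (2 * j + 1)"
      by (simp add: f_def add_ac)
  qed
  finally have pairs: "(\<lambda>j. f (2 * j) + f (2 * j + 1)) sums s"
    by (simp add: s_def)
  have "(\<Sum>k<2 * n. f k) = (\<Sum>j<n. f (2 * j) + f (2 * j + 1))" for n
    by (induction n) (simp_all add: add_ac)
  then have even: "(\<lambda>n. \<Sum>k<2 * n. f k) \<longlonglongrightarrow> s"
    using pairs by (simp add: sums_def)
  have "(\<lambda>k. inverse (x + of_nat k)) \<longlonglongrightarrow> 0"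
    by (intro filterlim_compose[OF tendsto_inverse_0]
              tendsto_add_filterlim_at_infinity[OF tendsto_const] tendsto_of_nat)
  then have "(\<lambda>n. inverse (x + of_nat (2 * n))) \<longlonglongrightarrow> 0"
    by (rule LIMSEQ_subseq_LIMSEQ[of _ _ "\<lambda>n. 2 * n", unfolded o_def])
      (simp add: strict_mono_def)
  then have "(\<lambda>n. f (2 * n)) \<longlonglongrightarrow> 0"
    by (simp add: f_def divide_inverse add.commute)
  from tendsto_add[OF even this] have odd: "(\<lambda>n. \<Sum>k<2 * n + 1. f k) \<longlonglongrightarrow> s"
    by simp
  show ?thesis
    using LIMSEQ_even_odd[OF even odd] by (simp add: sums_def f_def s_def)
qed

lemma beta1_eq_Digamma:
  assumes "x \<notin> \<int>\<^sub>\<le>\<^sub>0"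
  shows "beta1 x = (Digamma ((x + 1) / 2) - Digamma (x / 2)) / 2"
  using sums_alternating_inverse_Digamma[OF assms] by (simp add: beta1_def sums_iff)

lemma cot_add_cot_pi_half_minus:
  fixes p :: complex
  assumes "sin (2 * p) \<noteq> 0"
  shows "cot p + cot (of_real pi / 2 - p) = 2 / sin (2 * p)"
proof -
  have "sin p \<noteq> 0" "cos p \<noteq> 0"
    using assms by (auto simp: sin_double)
  have "cot (of_real pi / 2 - p) = sin p / cos p"
    by (simp add: cot_def sin_cos_eq[of p] cos_sin_eq[of p])
  then have "cot p + cot (of_real pi / 2 - p) = cos p / sin p + sin p / cos p"
    by (simp add: cot_def)
  also have "\<dots> = 1 / (sin p * cos p)"
    using \<open>sin p \<noteq> 0\<close> \<open>cos p \<noteq> 0\<close> by (simp add: field_simps flip: power2_eq_square)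
  finally show ?thesis
    by (simp add: sin_double)
qed

lemma beta1_reflection:
  assumes "x \<notin> \<int>"
  shows "beta1 x + beta1 (1 - x) = of_real pi / sin (of_real pi * x)"
proof -
  have one_minus: "1 - x \<notin> \<int>"
    using assms Ints_diff[of 1 "1 - x"] by auto
  have "z \<in> \<int>" if "z / 2 \<in> \<int>" for z :: complex
    using Ints_mult[of 2 "z / 2"] that by simp
  then have halves: "x / 2 \<notin> \<int>" "(1 - x) / 2 \<notin> \<int>"
    using assms one_minus by blast+
  have sin: "sin (2 * (of_real pi * (x / 2))) \<noteq> 0"
    using assms by (subst sin_eq_0) auto
  have "beta1 x + beta1 (1 - x)
      = ((Digamma (1 - (1 - x) / 2) - Digamma ((1 - x) / 2))
         + (Digamma (1 - x / 2) - Digamma (x / 2))) / 2"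
    using assms one_minus
    by (simp add: beta1_eq_Digamma not_in_Ints_imp_not_in_nonpos_Ints field_simps)
  also have "\<dots> = of_real pi * (cot (of_real pi * ((1 - x) / 2)) + cot (of_real pi * (x / 2))) / 2"
    by (simp add: Digamma_reflection_complex halves algebra_simps)
  also have "of_real pi * ((1 - x) / 2) = of_real pi / 2 - of_real pi * (x / 2)"
    by (simp add: field_simps)
  also have "of_real pi * (cot (of_real pi / 2 - of_real pi * (x / 2)) + cot (of_real pi * (x / 2))) / 2
      = of_real pi / sin (of_real pi * x)"
    using cot_add_cot_pi_half_minus[OF sin] by (simp add: add.commute)
  finally show ?thesis .
qed

lemma pochhammer_div_pochhammer_plus_one:
  fixes x :: "'a :: field_char_0"
  assumes "x \<notin> \<int>\<^sub>\<le>\<^sub>0"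
  shows "pochhammer x n / pochhammer (x + 1) n = x / (x + of_nat n)"
proof -
  have "pochhammer (x + 1) n \<noteq> 0"
    using assms by (auto simp: pochhammer_eq_0_iff eq_neg_iff_add_eq_0 add.assoc simp flip: of_nat_Suc
                         dest: add_of_nat_neq_0_if_notin_nonpos_Ints)
  moreover have "pochhammer x n * (x + of_nat n) = x * pochhammer (x + 1) n"
    using pochhammer_Suc[of x n] pochhammer_rec[of x n] by simp
  ultimately show ?thesis
    using add_of_nat_neq_0_if_notin_nonpos_Ints[OF assms] by (simp add: field_simps)
qed

lemma hyp_term_partial_fractions:
  assumes "x \<notin> \<int>\<^sub>\<le>\<^sub>0" "y \<notin> \<int>\<^sub>\<le>\<^sub>0" "x \<noteq> y"
  shows "hyp_term [1, x, y] [x + 1, y + 1] z n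
           = x * y / (y - x) * (z ^ n / (of_nat n + x) - z ^ n / (of_nat n + y))"
proof -
  have "hyp_term [1, x, y] [x + 1, y + 1] z n
      = pochhammer 1 n / fact n * (pochhammer x n / pochhammer (x + 1) n)
        * (pochhammer y n / pochhammer (y + 1) n) * z ^ n"
    by (simp add: hyp_term_def mult_ac)
  also have "\<dots> = x / (x + of_nat n) * (y / (y + of_nat n)) * z ^ n"
    using assms by (simp add: pochhammer_div_pochhammer_plus_one flip: pochhammer_fact)
  also have "\<dots> = x * y / (y - x) * ((y - x) * z ^ n / ((of_nat n + x) * (of_nat n + y)))"
    using assms(3) by (simp add: add.commute)
  also have "(y - x) * z ^ n / ((of_nat n + x) * (of_nat n + y))
      = z ^ n / (of_nat n + x) - z ^ n / (of_nat n + y)"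
    using add_of_nat_neq_0_if_notin_nonpos_Ints[OF assms(1), of n]
          add_of_nat_neq_0_if_notin_nonpos_Ints[OF assms(2), of n]
    by (simp add: field_simps add.commute)
  finally show ?thesis .
qed

lemma hypergeom_partial_fractions_minus_one:
  assumes "x \<notin> \<int>\<^sub>\<le>\<^sub>0" "y \<notin> \<int>\<^sub>\<le>\<^sub>0" "x \<noteq> y"
  shows "hypergeom [1, x, y] [x + 1, y + 1] (-1) = x * y / (y - x) * (beta1 x - beta1 y)"
proof -
  have "(\<lambda>n. x * y / (y - x) * ((-1) ^ n / (of_nat n + x) - (-1) ^ n / (of_nat n + y)))
          sums (x * y / (y - x) * (beta1 x - beta1 y))"
    using sums_alternating_inverse_Digamma[OF assms(1)] sums_alternating_inverse_Digamma[OF assms(2)]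
    by (intro sums_mult sums_diff) (simp_all add: beta1_eq_Digamma assms)
  then show ?thesis
    by (simp add: hypergeom_def hyp_term_partial_fractions[OF assms] sums_iff)
qed

theorem mainTheorem10:
  fixes a b :: complex
  assumes "a \<noteq> 0"
    and "Re b > 0" and "Re (b + a) > 0" and "Re (b - a) > 0"
    and "\<forall>n::nat. 3/2 + a / (2*b) \<noteq> - of_nat n"
    and "\<forall>n::nat. 3/2 - a / (2*b) \<noteq> - of_nat n"
    and "\<forall>k::int. a / b \<noteq> 2 * of_int k + 1"
  shows "hypergeom [1, 1/2 - a/(2*b), 1/2 + a/(2*b)] [3/2 - a/(2*b), 3/2 + a/(2*b)] (-1)
           = (b^2 - a^2) / (2*a*b) *
               (of_real pi / 2 * (1 / cos (of_real pi * a / (2*b))) - beta1 ((a + b) / (2*b)))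
       \<and> (b^2 - a^2) / (2*a*b) *
               (of_real pi / 2 * (1 / cos (of_real pi * a / (2*b))) - beta1 ((a + b) / (2*b)))
           = (b^2 - a^2) / (8*a*b) *
               (Digamma ((3*b - a) / (4*b)) - Digamma ((b - a) / (4*b))
                - Digamma ((3*b + a) / (4*b)) + Digamma ((b + a) / (4*b)))"
proof -
  text \<open>Only \<open>a \<noteq> 0\<close>, \<open>b \<noteq> 0\<close> and the oddness condition are needed: the conditions on
    \<open>3/2 \<plusminus> a/(2b)\<close> follow from the oddness condition, and the series converges without the
    conditions on real parts.\<close>
  have b: "b \<noteq> 0" using assms(2) by auto
  define x where "x = 1/2 - a / (2*b)"
  have x_notin_Ints: "x \<notin> \<int>"
  proof
    assume "x \<in> \<int>"
    then obtain k where "x = of_int k" by (auto elim: Ints_cases)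
    then have "a / b = 2 * of_int (- k) + 1" using b by (simp add: x_def field_simps)
    with assms(7) show False by blast
  qed
  then have x: "x \<notin> \<int>\<^sub>\<le>\<^sub>0" "1 - x \<notin> \<int>\<^sub>\<le>\<^sub>0" "x \<noteq> 1 - x"
    using Ints_diff[of 1 "1 - x"] assms(1) b
    by (auto intro: not_in_Ints_imp_not_in_nonpos_Ints simp: x_def field_simps)
  have "hypergeom [1, 1/2 - a/(2*b), 1/2 + a/(2*b)] [3/2 - a/(2*b), 3/2 + a/(2*b)] (-1)
      = hypergeom [1, x, 1 - x] [x + 1, (1 - x) + 1] (-1)"
    by (simp add: x_def)
  also have "\<dots> = x * (1 - x) / ((1 - x) - x) * (beta1 x - beta1 (1 - x))"
    by (rule hypergeom_partial_fractions_minus_one[OF x])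
  also have "x * (1 - x) / ((1 - x) - x) = (b^2 - a^2) / (4*a*b)"
    using assms(1) b by (simp add: x_def field_simps power2_eq_square)
  finally have hyp: "hypergeom [1, 1/2 - a/(2*b), 1/2 + a/(2*b)] [3/2 - a/(2*b), 3/2 + a/(2*b)] (-1)
      = (b^2 - a^2) / (4*a*b) * (beta1 x - beta1 (1 - x))" .
  have "sin (of_real pi * x) = cos (of_real pi * a / (2*b))"
    by (simp add: x_def right_diff_distrib sin_diff)
  then have sec: "of_real pi / 2 * (1 / cos (of_real pi * a / (2*b))) = (beta1 x + beta1 (1 - x)) / 2"
    using beta1_reflection[OF x_notin_Ints] by simp
  have Digamma: "Digamma ((3*b - a) / (4*b)) - Digamma ((b - a) / (4*b))
      - Digamma ((3*b + a) / (4*b)) + Digamma ((b + a) / (4*b)) = 2 * beta1 x - 2 * beta1 (1 - x)"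
    unfolding beta1_eq_Digamma[OF x(1)] beta1_eq_Digamma[OF x(2)] using b
    by (simp add: x_def field_simps)
  have beta1_arg: "(a + b) / (2*b) = 1 - x"
    using b by (simp add: x_def field_simps)
  show ?thesis
    unfolding hyp sec Digamma beta1_arg using assms(1) b by (simp add: field_simps)
qed

end
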